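(* Let $$\Sigma_1=\begin{pmatrix}-1&-1&1&1\\1&1&1&1\\1&1&1&1\\1&1&1&1\end{pmatrix},\quad \Sigma_2=\begin{pmatrix}-1&-1&1&1\\1&-1&-1&1\\1&1&1&1\\1&1&1&1\end{pmatrix},\quad \Sigma_3=\begin{pmatrix}-1&-1&1&1\\1&-1&1&1\\1&1&-1&1\\1&1&1&1\end{pmatrix}.$$ Then every $4\times4$ matrix with entries $\pm1$ and vanishing permanent is equivalent to exactly one of $\Sigma_1,\Sigma_1^{t},\Sigma_2,\Sigma_2^{t},\Sigma_3$, and these five matrices (which all have vanishing permanent) are pairwise inequivalent. That is, up to equivalence there are exactly five $4\times4$ $(\pm1)$-matrices with vanishing permanent.
   Context: The permanent of $\Sigma=[\sigma_{ij}]$ is $\sum_{\lambda\in\mathrm{Sym}(4)}\sigma_{1,\lambda(1)}\cdots\sigma_{4,\lambda(4)}$; $\Sigma^t$ is the transpose. Two matrices with entries $\pm1$ are equivalent if one is obtained from the other by a finite succession of the operations: interchanging two rows or two columns; negating a row or a column (transposition is not an allowed operation). *)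

theory Defs
  imports "HOL-Analysis.Analysis" "HOL-Combinatorics.Permutations"
begin

type_synonym pmmat = "int ^ 4 ^ 4"

definition pm_matrix :: "pmmat \<Rightarrow> bool" where
  "pm_matrix A \<longleftrightarrow> (\<forall>i j. A $ i $ j = 1 \<or> A $ i $ j = -1)"

definition permanent :: "pmmat \<Rightarrow> int" where
  "permanent A = (\<Sum>p | p permutes (UNIV :: 4 set). \<Prod>i\<in>UNIV. A $ i $ p i)"

inductive pm_step :: "pmmat \<Rightarrow> pmmat \<Rightarrow> bool" where
  swap_rows: "pm_step A (\<chi> r c. A $ (Transposition.transpose i j r) $ c)"
| swap_cols: "pm_step A (\<chi> r c. A $ r $ (Transposition.transpose i j c))"
| neg_row: "pm_step A (\<chi> r c. if r = i then - (A $ r $ c) else A $ r $ c)"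
| neg_col: "pm_step A (\<chi> r c. if c = j then - (A $ r $ c) else A $ r $ c)"

definition pm_equiv :: "pmmat \<Rightarrow> pmmat \<Rightarrow> bool" where
  "pm_equiv A B \<longleftrightarrow> pm_step\<^sup>*\<^sup>* A B"

text \<open>Row/column index of type 4 as 0..3 (rows numbered 1,2,3,4 = 1,2,3,0 in type 4).\<close>
definition idx4 :: "4 \<Rightarrow> nat" where
  "idx4 i = (if i = 1 then 0 else if i = 2 then 1 else if i = 3 then 2 else 3)"

definition mat_of_rows :: "int list list \<Rightarrow> pmmat" where
  "mat_of_rows xss = (\<chi> i j. xss ! idx4 i ! idx4 j)"

definition Sigma1 :: pmmat where
  "Sigma1 = mat_of_rows [[-1,-1,1,1],[1,1,1,1],[1,1,1,1],[1,1,1,1]]"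

definition Sigma2 :: pmmat where
  "Sigma2 = mat_of_rows [[-1,-1,1,1],[1,-1,-1,1],[1,1,1,1],[1,1,1,1]]"

definition Sigma3 :: pmmat where
  "Sigma3 = mat_of_rows [[-1,-1,1,1],[1,-1,1,1],[1,1,-1,1],[1,1,1,1]]"

end

theory Submission
  imports Defs
begin

text \<open>Negating a row or a column only changes the sign of the permanent, so a (\<plusminus>1)-matrix with
vanishing permanent is equivalent to one with vanishing permanent whose last row and last column consist
of ones. Its remaining 3\<times>3 block is one of 2^9 sign patterns, and for each of the 168 patterns with
vanishing permanent a suitable reordering of rows and columns, followed by the same sign normalisation,
produces one of the five matrices. Conversely, every elementary operation replaces the Gram matrix
A A^T by a signed, simultaneously permuted copy of itself, so the sum of the fourth powers of its
entries is an invariant, for A as well as for A^T; these two numbers separate the five matrices.\<close>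

lemma pm_equiv_refl [simp]: "pm_equiv A A"
  by (simp add: pm_equiv_def)

lemma pm_equiv_trans [trans]: "pm_equiv A B \<Longrightarrow> pm_equiv B C \<Longrightarrow> pm_equiv A C"
  unfolding pm_equiv_def by (rule rtranclp_trans)

lemma pm_step_imp_equiv: "pm_step A B \<Longrightarrow> pm_equiv A B"
  by (simp add: pm_equiv_def)

lemma pm_step_transpose: "pm_step A B \<Longrightarrow> pm_step (transpose A) (transpose B)"
proof (induction rule: pm_step.induct)
  case (swap_rows A i j)
  then show ?case using pm_step.swap_cols[of "transpose A" i j] by (simp add: transpose_def)
next
  case (swap_cols A i j)
  then show ?case using pm_step.swap_rows[of "transpose A" i j] by (simp add: transpose_def)
next
  case (neg_row A i)
  have "transpose (\<chi> r c. if r = i then - A $ r $ c else A $ r $ c)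
      = (\<chi> r c. if c = i then - transpose A $ r $ c else transpose A $ r $ c)"
    by (simp add: vec_eq_iff transpose_def)
  then show ?case by (simp add: pm_step.neg_col)
next
  case (neg_col A j)
  have "transpose (\<chi> r c. if c = j then - A $ r $ c else A $ r $ c)
      = (\<chi> r c. if r = j then - transpose A $ r $ c else transpose A $ r $ c)"
    by (simp add: vec_eq_iff transpose_def)
  then show ?case by (simp add: pm_step.neg_row)
qed

lemma pm_equiv_transpose: "pm_equiv A B \<Longrightarrow> pm_equiv (transpose A) (transpose B)"
  unfolding pm_equiv_def
  by (induction rule: rtranclp_induct) (auto intro: rtranclp.rtrancl_into_rtrancl pm_step_transpose)

lemma pm_step_pm_matrix: "pm_step A B \<Longrightarrow> pm_matrix A \<Longrightarrow> pm_matrix B"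
  by (induction rule: pm_step.induct) (auto simp: pm_matrix_def)

lemma pm_equiv_pm_matrix: "pm_equiv A B \<Longrightarrow> pm_matrix A \<Longrightarrow> pm_matrix B"
  unfolding pm_equiv_def by (induction rule: rtranclp_induct) (auto intro: pm_step_pm_matrix)

lemma pm_matrix_entry: "pm_matrix A \<Longrightarrow> A $ i $ j = 1 \<or> A $ i $ j = -1"
  by (simp add: pm_matrix_def)

lemma pm_step_signed_permute:
  assumes "pm_step A B"
  obtains p q s t where "p permutes UNIV" "q permutes UNIV"
    "\<And>r. s r * s r = 1" "\<And>c. t c * t c = 1" "B = (\<chi> r c. s r * t c * A $ p r $ q c)"
  using assms
proof cases
  case (swap_rows i j)
  then show ?thesis
    by (intro that[of "Transposition.transpose i j" id "\<lambda>_. 1" "\<lambda>_. 1"]) (simp_all add: permutes_swap_id)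
next
  case (swap_cols i j)
  then show ?thesis
    by (intro that[of id "Transposition.transpose i j" "\<lambda>_. 1" "\<lambda>_. 1"]) (simp_all add: permutes_swap_id)
next
  case (neg_row i)
  then show ?thesis
    by (intro that[of id id "\<lambda>r. if r = i then -1 else 1" "\<lambda>_. 1"]) (auto simp: vec_eq_iff)
next
  case (neg_col j)
  then show ?thesis
    by (intro that[of id id "\<lambda>_. 1" "\<lambda>c. if c = j then -1 else 1"]) (auto simp: vec_eq_iff)
qed

definition gram_moment :: "'a::comm_ring_1 ^ 'n::finite ^ 'm::finite \<Rightarrow> 'a" where
  "gram_moment A = (\<Sum>i\<in>UNIV. \<Sum>j\<in>UNIV. ((A ** transpose A) $ i $ j) ^ 4)"

lemma gram_moment_signed_permute:
  fixes A :: "'a::comm_ring_1 ^ 'n::finite ^ 'm::finite"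
  assumes p: "p permutes UNIV" and q: "q permutes UNIV"
    and s: "\<And>r. s r * s r = 1" and t: "\<And>c. t c * t c = 1"
  shows "gram_moment (\<chi> r c. s r * t c * A $ p r $ q c) = gram_moment A"
proof -
  let ?B = "\<chi> r c. s r * t c * A $ p r $ q c"
  have gram: "(?B ** transpose ?B) $ i $ j = s i * s j * (A ** transpose A) $ p i $ p j" for i j
  proof -
    have "(?B ** transpose ?B) $ i $ j = s i * s j * (\<Sum>c\<in>UNIV. A $ p i $ q c * A $ p j $ q c)"
    proof -
      have "s i * t c * a * (s j * t c * b) = s i * s j * (a * b)" for c and a b :: 'a
        using t[of c] by (metis (no_types, lifting) mult.assoc mult.commute mult.left_commute mult_1)
      then show ?thesis by (simp add: matrix_matrix_mult_def transpose_def sum_distrib_left)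
    qed
    also have "(\<Sum>c\<in>UNIV. A $ p i $ q c * A $ p j $ q c) = (A ** transpose A) $ p i $ p j"
      using sum.permute[OF q, of "\<lambda>c. A $ p i $ c * A $ p j $ c"]
      by (simp add: matrix_matrix_mult_def transpose_def o_def)
    finally show ?thesis .
  qed
  have "(s i * s j * x) ^ 4 = x ^ 4" for i j and x :: 'a
  proof -
    have "(s i * s j * x) ^ 4 = (s i * s i) ^ 2 * (s j * s j) ^ 2 * x ^ 4"
      by (simp add: power_mult_distrib power2_eq_square algebra_simps eval_nat_numeral)
    then show ?thesis by (simp add: s)
  qed
  then have "gram_moment ?B = (\<Sum>i\<in>UNIV. \<Sum>j\<in>UNIV. ((A ** transpose A) $ p i $ p j) ^ 4)"
    by (simp add: gram_moment_def gram)
  also have "\<dots> = gram_moment A"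
    using sum.permute[OF p, of "\<lambda>i. \<Sum>j\<in>UNIV. ((A ** transpose A) $ i $ p j) ^ 4"]
      sum.permute[OF p, of "\<lambda>j. ((A ** transpose A) $ _ $ j) ^ 4"]
    by (simp add: gram_moment_def o_def)
  finally show ?thesis .
qed

lemma pm_equiv_gram_moment:
  assumes "pm_equiv A B"
  shows "gram_moment A = gram_moment B \<and> gram_moment (transpose A) = gram_moment (transpose B)"
proof -
  have step_invariant: "gram_moment (B :: pmmat) = gram_moment A" if "pm_step A B" for A B
    using that by (elim pm_step_signed_permute) (simp add: gram_moment_signed_permute)
  have invariant: "gram_moment A = gram_moment B" if "pm_equiv A B" for A B
    using that unfolding pm_equiv_def
    by (induction rule: rtranclp_induct) (auto dest: step_invariant)
  show ?thesis using invariant[OF assms] invariant[OF pm_equiv_transpose[OF assms]] by simp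
qed

lemma permanent_scale:
  "permanent (\<chi> r c. s r * t c * A $ r $ c) = (\<Prod>r\<in>UNIV. s r) * (\<Prod>c\<in>UNIV. t c) * permanent A"
proof -
  have "(\<Prod>i\<in>UNIV. s i * t (p i) * A $ i $ p i)
      = (\<Prod>r\<in>UNIV. s r) * (\<Prod>c\<in>UNIV. t c) * (\<Prod>i\<in>UNIV. A $ i $ p i)"
    if "p permutes (UNIV :: 4 set)" for p
    using prod.permute[OF that, of t] by (simp add: prod.distrib o_def)
  then show ?thesis by (simp add: permanent_def sum_distrib_left)
qed

lemma pm_equiv_permute_rows:
  assumes "p permutes UNIV"
  shows "pm_equiv A (\<chi> r c. A $ p r $ c)"
  using assms finite_class.finite_UNIV
proof (induction p arbitrary: A rule: permutes_induct)
  case id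
  then show ?case by simp
next
  case (swap a b p)
  let ?A' = "\<chi> r c. A $ Transposition.transpose a b r $ c"
  have "pm_equiv A ?A'"
    by (rule pm_step_imp_equiv) (rule pm_step.swap_rows)
  also have "pm_equiv ?A' (\<chi> r c. ?A' $ p r $ c)"
    by (rule swap.IH)
  finally show ?case by simp
qed

lemma pm_equiv_negate_rows: "pm_equiv A (\<chi> r c. if r \<in> N then - A $ r $ c else A $ r $ c)"
proof -
  have "finite N" by simp
  then show ?thesis
  proof (induction N rule: finite_induct)
    case empty
    then show ?case by simp
  next
    case (insert i N)
    let ?B = "\<chi> r c. if r \<in> N then - A $ r $ c else A $ r $ c"
    have "pm_step ?B (\<chi> r c. if r = i then - ?B $ r $ c else ?B $ r $ c)"
      by (rule pm_step.neg_row)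
    also have "(\<chi> r c. if r = i then - ?B $ r $ c else ?B $ r $ c)
        = (\<chi> r c. if r \<in> insert i N then - A $ r $ c else A $ r $ c)"
      using insert.hyps(2) by (auto simp: vec_eq_iff)
    finally show ?case using insert.IH pm_equiv_trans pm_step_imp_equiv by blast
  qed
qed

lemma pm_equiv_scale_rows:
  assumes "\<And>r. s r = 1 \<or> s r = -1"
  shows "pm_equiv A (\<chi> r c. s r * A $ r $ c)"
proof -
  have "(\<chi> r c. s r * A $ r $ c) = (\<chi> r c. if r \<in> {r. s r = -1} then - A $ r $ c else A $ r $ c)"
    using assms by (auto simp: vec_eq_iff)
  then show ?thesis by (simp only: pm_equiv_negate_rows)
qed

lemma pm_equiv_signed_permute:
  assumes "p permutes UNIV" "q permutes UNIV"
    and "\<And>r. s r = 1 \<or> s r = -1" "\<And>c. t c = 1 \<or> t c = -1"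
  shows "pm_equiv A (\<chi> r c. s r * t c * A $ p r $ q c)"
proof -
  let ?B = "\<chi> r c. s r * A $ p r $ c"
  have "pm_equiv A (\<chi> r c. A $ p r $ c)"
    using assms(1) by (rule pm_equiv_permute_rows)
  also have "pm_equiv \<dots> ?B"
    using pm_equiv_scale_rows[OF assms(3), of "\<chi> r c. A $ p r $ c"] by simp
  finally have rows: "pm_equiv A ?B" .
  have "pm_equiv (transpose ?B) (\<chi> c r. t c * transpose ?B $ q c $ r)"
    using pm_equiv_permute_rows[OF assms(2)] pm_equiv_scale_rows[OF assms(4)] pm_equiv_trans by fastforce
  then have cols: "pm_equiv ?B (\<chi> r c. s r * t c * A $ p r $ q c)"
    using pm_equiv_transpose by (fastforce simp: transpose_def mult_ac)
  from rows cols show ?thesis by (rule pm_equiv_trans)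
qed

text \<open>Index 4 of type 4 is the last row and column: idx4 4 = 3.\<close>
definition sign_normalize :: "pmmat \<Rightarrow> pmmat" where
  "sign_normalize A = (\<chi> r c. A $ r $ 4 * (A $ 4 $ c * A $ 4 $ 4) * A $ r $ c)"

lemma pm_equiv_sign_normalize:
  assumes "pm_matrix A"
  shows "pm_equiv A (sign_normalize A)"
proof -
  have "A $ 4 $ c * A $ 4 $ 4 = 1 \<or> A $ 4 $ c * A $ 4 $ 4 = -1" for c
    using pm_matrix_entry[OF assms, of 4 c] pm_matrix_entry[OF assms, of 4 4] by auto
  then show ?thesis
    using pm_equiv_signed_permute[OF permutes_id permutes_id,
        of "\<lambda>r. A $ r $ 4" "\<lambda>c. A $ 4 $ c * A $ 4 $ 4" A] pm_matrix_entry[OF assms]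
    by (simp add: sign_normalize_def)
qed

lemma sign_normalize_border:
  assumes "pm_matrix A"
  shows "sign_normalize A $ r $ 4 = 1" "sign_normalize A $ 4 $ c = 1"
  using pm_matrix_entry[OF assms, of r 4] pm_matrix_entry[OF assms, of 4 c] pm_matrix_entry[OF assms, of 4 4]
  by (auto simp: sign_normalize_def)

lemma permanent_sign_normalize: "permanent A = 0 \<Longrightarrow> permanent (sign_normalize A) = 0"
  using permanent_scale[of "\<lambda>r. A $ r $ 4" "\<lambda>c. A $ 4 $ c * A $ 4 $ 4" A]
  by (simp add: sign_normalize_def)

definition of_idx4 :: "nat \<Rightarrow> 4" where
  "of_idx4 n = (if n = 0 then 1 else if n = 1 then 2 else if n = 2 then 3 else 4)"

lemma idx4_of_idx4: "n < 4 \<Longrightarrow> idx4 (of_idx4 n) = n"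
  by (auto simp: of_idx4_def idx4_def)

lemma of_idx4_idx4: "of_idx4 (idx4 i) = i"
  using exhaust_4[of i] by (auto simp: of_idx4_def idx4_def)

lemma idx4_less: "idx4 i < 4"
  by (simp add: idx4_def)

definition tabulate4 :: "(nat \<Rightarrow> nat \<Rightarrow> int) \<Rightarrow> int list list" where
  "tabulate4 f = map (\<lambda>a. map (f a) [0..<4]) [0..<4]"

lemma mat_of_rows_tabulate4: "mat_of_rows (tabulate4 f) = (\<chi> r c. f (idx4 r) (idx4 c))"
  by (simp add: mat_of_rows_def tabulate4_def idx4_less)

definition permute_rows_cols :: "nat list \<Rightarrow> nat list \<Rightarrow> int list list \<Rightarrow> int list list" where
  "permute_rows_cols p q xss = tabulate4 (\<lambda>a b. xss ! (p ! a) ! (q ! b))"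

definition sign_normalize_list :: "int list list \<Rightarrow> int list list" where
  "sign_normalize_list xss = tabulate4 (\<lambda>a b. xss ! a ! 3 * (xss ! 3 ! b * xss ! 3 ! 3) * xss ! a ! b)"

lemma mat_of_rows_sign_normalize_list:
  "mat_of_rows (sign_normalize_list xss) = sign_normalize (mat_of_rows xss)"
  unfolding sign_normalize_list_def mat_of_rows_tabulate4
  by (simp add: sign_normalize_def mat_of_rows_def idx4_def)

lemma sort_eq_upt4D:
  assumes "sort p = [0..<4]"
  shows "distinct p" "set p = {0..<4}" "length p = 4"
  by (metis assms distinct_sort distinct_upt, metis assms set_sort set_upt,
      metis assms length_sort length_upt diff_zero)

lemma permutes_of_perm_list:
  assumes "sort p = [0..<4]"
  shows "(\<lambda>r. of_idx4 (p ! idx4 r)) permutes UNIV"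
proof -
  note p = sort_eq_upt4D[OF assms]
  have "inj (\<lambda>r. of_idx4 (p ! idx4 r))"
  proof (rule injI)
    fix r r' assume "of_idx4 (p ! idx4 r) = of_idx4 (p ! idx4 r')"
    then have "p ! idx4 r = p ! idx4 r'"
      using p nth_mem[of "idx4 _" p] idx4_less by (metis atLeastLessThan_iff idx4_of_idx4)
    then show "r = r'"
      using p idx4_less by (metis nth_eq_iff_index_eq of_idx4_idx4)
  qed
  then show ?thesis by (intro inj_imp_permutes) auto
qed

lemma pm_equiv_permute_rows_cols:
  assumes "sort p = [0..<4]" "sort q = [0..<4]"
  shows "pm_equiv (mat_of_rows xss) (mat_of_rows (permute_rows_cols p q xss))"
proof -
  have "p ! idx4 r < 4" "q ! idx4 r < 4" for r
    using sort_eq_upt4D[OF assms(1)] sort_eq_upt4D[OF assms(2)] nth_mem idx4_less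
    by (metis atLeastLessThan_iff)+
  then have "mat_of_rows (permute_rows_cols p q xss)
      = (\<chi> r c. 1 * 1 * mat_of_rows xss $ of_idx4 (p ! idx4 r) $ of_idx4 (q ! idx4 c))"
    unfolding permute_rows_cols_def mat_of_rows_tabulate4 by (simp add: mat_of_rows_def idx4_of_idx4)
  then show ?thesis
    using pm_equiv_signed_permute[OF permutes_of_perm_list[OF assms(1)] permutes_of_perm_list[OF assms(2)],
        of "\<lambda>_. 1" "\<lambda>_. 1" "mat_of_rows xss"]
    by simp
qed

definition perms4 :: "nat list list" where
  "perms4 = [[0,1,2,3], [0,1,3,2], [0,2,1,3], [0,2,3,1], [0,3,1,2], [0,3,2,1],
             [1,0,2,3], [1,0,3,2], [1,2,0,3], [1,2,3,0], [1,3,0,2], [1,3,2,0],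
             [2,0,1,3], [2,0,3,1], [2,1,0,3], [2,1,3,0], [2,3,0,1], [2,3,1,0],
             [3,0,1,2], [3,0,2,1], [3,1,0,2], [3,1,2,0], [3,2,0,1], [3,2,1,0]]"

definition permanent_list :: "int list list \<Rightarrow> int" where
  "permanent_list xss = (\<Sum>p\<leftarrow>perms4. xss!0!(p!0) * xss!1!(p!1) * xss!2!(p!2) * xss!3!(p!3))"

lemma permanent_mat_of_rows: "permanent (mat_of_rows xss) = permanent_list xss"
proof -
  have "{p. p permutes {a}} = {id}" for a :: 4
    by auto
  then show ?thesis
    unfolding permanent_def UNIV_4
    by (simp add: sum_over_permutations_insert Transposition.transpose_def mat_of_rows_def idx4_def
        permanent_list_def perms4_def)
qed

definition bordered :: "int list \<Rightarrow> int list list" where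
  "bordered c = [[c!0, c!1, c!2, 1], [c!3, c!4, c!5, 1], [c!6, c!7, c!8, 1], [1, 1, 1, 1]]"

lemma sign_normalize_eq_bordered:
  assumes "pm_matrix A"
  obtains c where "c \<in> set (List.n_lists 9 [1, -1])" "sign_normalize A = mat_of_rows (bordered c)"
proof -
  let ?N = "sign_normalize A"
  let ?c = "[?N$1$1, ?N$1$2, ?N$1$3, ?N$2$1, ?N$2$2, ?N$2$3, ?N$3$1, ?N$3$2, ?N$3$3]"
  have "pm_matrix ?N"
    using assms pm_equiv_pm_matrix pm_equiv_sign_normalize by blast
  then have "?c \<in> set (List.n_lists 9 [1, -1])"
    by (auto simp: set_n_lists pm_matrix_def)
  moreover have "?N = mat_of_rows (bordered ?c)"
    using sign_normalize_border[OF assms]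
    by (simp add: vec_eq_iff forall_4 mat_of_rows_def bordered_def idx4_def)
  ultimately show thesis by (rule that)
qed

definition normal_forms :: "int list list list" where
  "normal_forms =
    [[[-1,-1,1,1], [1,1,1,1], [1,1,1,1], [1,1,1,1]],
     [[-1,1,1,1], [-1,1,1,1], [1,1,1,1], [1,1,1,1]],
     [[-1,-1,1,1], [1,-1,-1,1], [1,1,1,1], [1,1,1,1]],
     [[-1,1,1,1], [-1,-1,1,1], [1,-1,1,1], [1,1,1,1]],
     [[-1,-1,1,1], [1,-1,1,1], [1,1,-1,1], [1,1,1,1]]]"

definition zero_permanent_cores :: "int list list" where
  "zero_permanent_cores = filter (\<lambda>c. permanent_list (bordered c) = 0) (List.n_lists 9 [1, -1])"

text \<open>Found by exhaustive search: for the k-th core, the k-th pair (p, q) lists the rows and the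
columns in the order after which sign normalisation gives a normal form.\<close>
definition certificates :: "(nat list \<times> nat list) list" where
  "certificates = [
   ([0,1,2,3], [0,1,2,3]), ([0,1,2,3], [0,2,1,3]), ([0,1,2,3], [0,3,1,2]), ([0,1,2,3], [0,1,2,3]),
   ([0,1,2,3], [1,0,2,3]), ([1,0,2,3], [0,1,2,3]), ([0,1,2,3], [0,2,3,1]), ([0,1,2,3], [0,3,2,1]),
   ([0,1,2,3], [2,0,1,3]), ([1,0,2,3], [0,2,1,3]), ([0,1,2,3], [0,1,3,2]), ([0,1,2,3], [0,3,1,2]),
   ([1,0,2,3], [0,3,1,2]), ([0,1,2,3], [0,1,2,3]), ([0,1,2,3], [0,2,1,3]), ([0,1,2,3], [3,0,1,2]),
   ([0,2,1,3], [0,1,2,3]), ([0,3,1,2], [0,1,2,3]), ([0,1,3,2], [1,0,2,3]), ([0,1,2,3], [3,1,0,2]),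
   ([0,1,2,3], [2,1,0,3]), ([0,1,2,3], [1,0,2,3]), ([0,1,3,2], [3,1,0,2]), ([0,1,3,2], [2,1,0,3]),
   ([0,1,2,3], [3,2,0,1]), ([0,1,3,2], [2,0,1,3]), ([0,1,2,3], [1,2,0,3]), ([0,1,3,2], [3,2,0,1]),
   ([0,1,2,3], [2,0,1,3]), ([0,1,3,2], [1,2,0,3]), ([0,1,3,2], [2,3,0,1]), ([0,1,3,2], [1,3,0,2]),
   ([0,1,2,3], [3,0,1,2]), ([0,1,2,3], [2,3,0,1]), ([0,1,2,3], [1,3,0,2]), ([0,1,3,2], [3,0,1,2]),
   ([0,2,1,3], [1,0,2,3]), ([0,1,3,2], [0,1,2,3]), ([0,1,2,3], [2,0,1,3]), ([0,1,2,3], [3,0,1,2]),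
   ([0,3,1,2], [1,0,2,3]), ([0,1,2,3], [0,1,2,3]), ([0,1,3,2], [3,0,1,2]), ([0,1,3,2], [2,0,1,3]),
   ([0,1,2,3], [3,2,1,0]), ([0,1,2,3], [0,2,1,3]), ([0,1,3,2], [2,1,0,3]), ([0,1,3,2], [2,3,1,0]),
   ([0,1,3,2], [0,3,1,2]), ([0,1,2,3], [3,1,0,2]), ([0,1,3,2], [3,2,1,0]), ([0,1,2,3], [2,1,0,3]),
   ([0,1,3,2], [0,2,1,3]), ([0,1,2,3], [2,3,1,0]), ([0,1,3,2], [3,1,0,2]), ([0,1,2,3], [0,3,1,2]),
   ([2,0,1,3], [0,1,2,3]), ([0,2,1,3], [0,2,3,1]), ([0,2,1,3], [0,3,2,1]), ([0,2,1,3], [1,0,2,3]),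
   ([0,2,3,1], [3,1,0,2]), ([0,2,3,1], [2,1,0,3]), ([0,2,1,3], [0,1,2,3]), ([0,2,3,1], [3,0,1,2]),
   ([0,2,3,1], [2,0,1,3]), ([3,0,1,2], [0,1,2,3]), ([0,3,1,2], [0,3,2,1]), ([0,3,1,2], [0,2,3,1]),
   ([0,2,3,1], [1,3,2,0]), ([0,2,3,1], [0,3,2,1]), ([0,2,1,3], [3,2,0,1]), ([1,2,0,3], [0,2,3,1]),
   ([1,3,0,2], [0,3,2,1]), ([2,3,0,1], [0,3,1,2]), ([1,2,0,3], [0,3,2,1]), ([1,3,0,2], [0,2,3,1]),
   ([2,3,0,1], [0,2,1,3]), ([0,2,3,1], [1,2,3,0]), ([0,2,3,1], [0,2,3,1]), ([0,2,1,3], [2,3,0,1]),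
   ([0,2,1,3], [2,0,1,3]), ([0,1,2,3], [1,0,2,3]), ([0,1,3,2], [0,2,1,3]), ([0,1,2,3], [3,0,2,1]),
   ([0,1,2,3], [0,1,2,3]), ([0,1,2,3], [3,1,2,0]), ([0,1,3,2], [1,2,0,3]), ([0,1,3,2], [1,3,2,0]),
   ([0,1,3,2], [0,3,2,1]), ([0,1,2,3], [3,2,0,1]), ([0,3,1,2], [2,0,1,3]), ([0,1,2,3], [0,2,1,3]),
   ([0,1,3,2], [3,0,2,1]), ([0,1,3,2], [1,0,2,3]), ([0,1,3,2], [3,1,2,0]), ([0,1,2,3], [1,2,0,3]),
   ([0,1,3,2], [0,1,2,3]), ([0,1,3,2], [3,2,0,1]), ([0,1,2,3], [1,3,2,0]), ([0,1,2,3], [0,3,2,1]),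
   ([2,0,1,3], [0,2,1,3]), ([0,2,1,3], [0,1,3,2]), ([0,2,1,3], [0,3,1,2]), ([0,2,3,1], [3,2,0,1]),
   ([0,2,1,3], [2,0,1,3]), ([0,2,3,1], [1,2,0,3]), ([0,2,3,1], [2,3,1,0]), ([0,2,3,1], [0,3,1,2]),
   ([0,2,1,3], [3,1,0,2]), ([1,2,0,3], [0,1,3,2]), ([2,3,0,1], [0,3,2,1]), ([1,3,0,2], [0,3,1,2]),
   ([0,2,1,3], [0,2,1,3]), ([0,2,3,1], [3,0,2,1]), ([0,2,3,1], [1,0,2,3]), ([0,3,1,2], [0,3,1,2]),
   ([3,0,1,2], [0,2,1,3]), ([0,3,1,2], [0,1,3,2]), ([1,2,0,3], [0,3,1,2]), ([1,3,0,2], [0,1,3,2]),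
   ([2,3,0,1], [0,1,2,3]), ([0,2,3,1], [2,1,3,0]), ([0,2,1,3], [1,3,0,2]), ([0,2,3,1], [0,1,3,2]),
   ([2,0,1,3], [0,3,1,2]), ([0,2,1,3], [0,1,2,3]), ([0,2,1,3], [0,2,1,3]), ([0,2,3,1], [2,3,0,1]),
   ([0,2,3,1], [1,3,0,2]), ([0,2,1,3], [3,0,1,2]), ([0,2,3,1], [3,2,1,0]), ([0,2,1,3], [2,1,0,3]),
   ([0,2,3,1], [0,2,1,3]), ([1,2,0,3], [0,1,2,3]), ([2,3,0,1], [0,2,3,1]), ([1,3,0,2], [0,2,1,3]),
   ([0,2,3,1], [3,1,2,0]), ([0,2,1,3], [1,2,0,3]), ([0,2,3,1], [0,1,2,3]), ([1,2,0,3], [0,2,1,3]),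
   ([2,3,0,1], [0,1,3,2]), ([1,3,0,2], [0,1,2,3]), ([0,3,1,2], [0,2,1,3]), ([0,3,1,2], [0,1,2,3]),
   ([3,0,1,2], [0,3,1,2]), ([0,2,1,3], [0,3,1,2]), ([0,2,3,1], [2,0,3,1]), ([0,2,3,1], [1,0,3,2]),
   ([0,2,1,3], [3,0,1,2]), ([0,1,2,3], [1,0,3,2]), ([0,1,2,3], [2,0,3,1]), ([0,1,3,2], [0,3,1,2]),
   ([0,1,2,3], [0,1,3,2]), ([0,1,3,2], [1,3,0,2]), ([0,1,2,3], [2,1,3,0]), ([0,1,3,2], [1,2,3,0]),
   ([0,1,3,2], [0,2,3,1]), ([0,1,2,3], [2,3,0,1]), ([0,1,3,2], [2,3,0,1]), ([0,1,2,3], [0,2,3,1]),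
   ([0,1,2,3], [1,2,3,0]), ([0,1,3,2], [2,1,3,0]), ([0,1,2,3], [1,3,0,2]), ([0,1,3,2], [0,1,3,2]),
   ([0,1,2,3], [0,3,1,2]), ([0,1,3,2], [2,0,3,1]), ([0,1,3,2], [1,0,3,2]), ([0,3,1,2], [3,0,1,2])]"

lemma certificates_correct:
  "list_all2 (\<lambda>c (p, q). sort p = [0..<4] \<and> sort q = [0..<4] \<and>
       sign_normalize_list (permute_rows_cols p q (bordered c)) \<in> set normal_forms)
     zero_permanent_cores certificates"
  by code_simp

lemma pm_equiv_normal_form:
  assumes "pm_matrix A" "permanent A = 0"
  shows "\<exists>L\<in>set normal_forms. pm_equiv A (mat_of_rows L)"
proof -
  obtain c where c: "c \<in> set (List.n_lists 9 [1, -1])" and N: "sign_normalize A = mat_of_rows (bordered c)"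
    using sign_normalize_eq_bordered[OF assms(1)] .
  have "permanent_list (bordered c) = 0"
    using permanent_sign_normalize[OF assms(2)] by (simp add: N permanent_mat_of_rows)
  with c have "c \<in> set zero_permanent_cores"
    by (simp add: zero_permanent_cores_def)
  then obtain p q where pq: "sort p = [0..<4]" "sort q = [0..<4]"
      and L: "sign_normalize_list (permute_rows_cols p q (bordered c)) \<in> set normal_forms"
    using certificates_correct by (fastforce simp: in_set_conv_nth list_all2_conv_all_nth)
  let ?M = "mat_of_rows (permute_rows_cols p q (bordered c))"
  have "pm_equiv A (mat_of_rows (bordered c))"
    using pm_equiv_sign_normalize[OF assms(1)] by (simp add: N)
  also have "pm_equiv \<dots> ?M"
    using pq by (rule pm_equiv_permute_rows_cols)
  finally have "pm_equiv A ?M" .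
  moreover from this have "pm_equiv ?M (sign_normalize ?M)"
    using assms(1) pm_equiv_pm_matrix pm_equiv_sign_normalize by blast
  ultimately show ?thesis
    using L by (metis mat_of_rows_sign_normalize_list pm_equiv_trans)
qed

lemma Sigmas_eq_normal_forms:
  "{Sigma1, transpose Sigma1, Sigma2, transpose Sigma2, Sigma3} = mat_of_rows ` set normal_forms"
proof -
  have "transpose Sigma1 = mat_of_rows (normal_forms ! 1)"
    "transpose Sigma2 = mat_of_rows (normal_forms ! 3)"
    by (simp_all add: Sigma1_def Sigma2_def normal_forms_def transpose_def mat_of_rows_def
        vec_eq_iff forall_4 idx4_def)
  then show ?thesis
    by (simp add: normal_forms_def Sigma1_def Sigma2_def Sigma3_def)
qed

lemma Sigmas_pm_permanent_zero:
  "S \<in> {Sigma1, transpose Sigma1, Sigma2, transpose Sigma2, Sigma3} \<Longrightarrow>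
     pm_matrix S \<and> permanent S = 0"
  unfolding Sigmas_eq_normal_forms
  by (auto simp: normal_forms_def permanent_mat_of_rows permanent_list_def perms4_def)
     (auto simp: pm_matrix_def mat_of_rows_def idx4_def)

lemma gram_moments_Sigmas:
  "gram_moment Sigma1 = 2560" "gram_moment (transpose Sigma1) = 2176"
  "gram_moment Sigma2 = 1536" "gram_moment (transpose Sigma2) = 1152"
  "gram_moment Sigma3 = 1152" "gram_moment (transpose Sigma3) = 1152"
  by (simp_all add: gram_moment_def matrix_matrix_mult_def transpose_def sum_4
      Sigma1_def Sigma2_def Sigma3_def mat_of_rows_def idx4_def)

lemma Sigmas_distinct_gram_moments:
  "distinct [Sigma1, transpose Sigma1, Sigma2, transpose Sigma2, Sigma3]"
  "inj_on (\<lambda>S. (gram_moment S, gram_moment (transpose S)))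
     {Sigma1, transpose Sigma1, Sigma2, transpose Sigma2, Sigma3}"
proof -
  have "distinct (map (\<lambda>S. (gram_moment S, gram_moment (transpose S)))
      [Sigma1, transpose Sigma1, Sigma2, transpose Sigma2, Sigma3])"
    by (simp add: gram_moments_Sigmas)
  then show "distinct [Sigma1, transpose Sigma1, Sigma2, transpose Sigma2, Sigma3]"
    "inj_on (\<lambda>S. (gram_moment S, gram_moment (transpose S)))
       {Sigma1, transpose Sigma1, Sigma2, transpose Sigma2, Sigma3}"
    by (simp_all only: distinct_map list.set)
qed

lemma Sigmas_pm_equiv_common_eq:
  assumes "S \<in> {Sigma1, transpose Sigma1, Sigma2, transpose Sigma2, Sigma3}"
    and "T \<in> {Sigma1, transpose Sigma1, Sigma2, transpose Sigma2, Sigma3}"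
    and "pm_equiv A S" "pm_equiv A T"
  shows "S = T"
proof (rule inj_onD[OF Sigmas_distinct_gram_moments(2) _ assms(1,2)])
  show "(gram_moment S, gram_moment (transpose S)) = (gram_moment T, gram_moment (transpose T))"
    using pm_equiv_gram_moment[OF assms(3)] pm_equiv_gram_moment[OF assms(4)] by simp
qed

lemma pm_equiv_Sigma:
  assumes "pm_matrix A" "permanent A = 0"
  obtains S where "S \<in> {Sigma1, transpose Sigma1, Sigma2, transpose Sigma2, Sigma3}" "pm_equiv A S"
  using pm_equiv_normal_form[OF assms] that unfolding Sigmas_eq_normal_forms by blast

theorem theorem3p6:
  shows "(\<forall>A. pm_matrix A \<and> permanent A = 0 \<longrightarrow>
            (\<exists>!S. S \<in> {Sigma1, transpose Sigma1, Sigma2, transpose Sigma2, Sigma3} \<and> pm_equiv A S))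
       \<and> (\<forall>S\<in>{Sigma1, transpose Sigma1, Sigma2, transpose Sigma2, Sigma3}.
            pm_matrix S \<and> permanent S = 0)
       \<and> distinct [Sigma1, transpose Sigma1, Sigma2, transpose Sigma2, Sigma3]
       \<and> (\<forall>S\<in>{Sigma1, transpose Sigma1, Sigma2, transpose Sigma2, Sigma3}.
            \<forall>T\<in>{Sigma1, transpose Sigma1, Sigma2, transpose Sigma2, Sigma3}.
              pm_equiv S T \<longrightarrow> S = T)"
proof -
  define Sigmas where "Sigmas = {Sigma1, transpose Sigma1, Sigma2, transpose Sigma2, Sigma3}"
  note common_eq = Sigmas_pm_equiv_common_eq[folded Sigmas_def]
  have unique: "\<exists>!S. S \<in> Sigmas \<and> pm_equiv A S" if A: "pm_matrix A" "permanent A = 0" for A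
  proof -
    obtain S where "S \<in> Sigmas" "pm_equiv A S"
      using pm_equiv_Sigma[OF A, folded Sigmas_def] .
    then show ?thesis using common_eq by blast
  qed
  show ?thesis
    unfolding Sigmas_def[symmetric]
    using unique Sigmas_pm_permanent_zero[folded Sigmas_def] Sigmas_distinct_gram_moments(1)
      common_eq[OF _ _ pm_equiv_refl]
    by blast
qed

end
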